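(* Let $d\ge 1$, $\eta>0$, $\sigma>1$, $\alpha\ge 1$, and let $0<\epsilon<\eta$. Consider the distribution $\mathcal{D}$ on $\mathbb{R}^d\times\{-1,+1\}$ given by $y$ uniform on $\{-1,+1\}$, $\bm{\mu}=(\eta,\dots,\eta)\in\mathbb{R}^d$, and $\bm{x}\mid y=+1\sim\mathcal{N}(\bm{\mu},\sigma^2 I)$, $\bm{x}\mid y=-1\sim\mathcal{N}(-\alpha\bm{\mu}, I)$. Consider linear classifiers $f(\bm{x})=\operatorname{sign}(\bm{w}^\top\bm{x}+b)$ with $\bm{w}\in\mathbb{R}^d$, $\|\bm{w}\|_2=1$, $b\in\mathbb{R}$. Define the standard error $\mathcal{R}_{nat}(f)=\Pr(f(\bm{x})\neq y)$, the robust error $\mathcal{R}_{rob}(f)=\Pr(\exists\,\bm{\delta},\ \|\bm{\delta}\|_\infty\le\epsilon:\ f(\bm{x}+\bm{\delta})\neq y)$, and the class-conditional errors $\mathcal{R}_{nat}(f\mid y)$, $\mathcal{R}_{rob}(f\mid y)$ obtained by conditioning on the label. Let $f_{nat}$ minimize $\mathcal{R}_{nat}$ and $f_{rob}$ minimize $\mathcal{R}_{rob}$ over $(\bm{w},b)$, and let $A=\frac{2\sqrt{d}\,\sigma}{\sigma^2-1}>0$. Then $$\mathcal{R}_{nat}(f_{nat}\mid +1)=\Pr\Big(\mathcal{N}(0,1)<-A\big(\tfrac{1+\alpha}{2}\eta\big)+\sqrt{\big(\tfrac{A}{\sigma}\big)^2\big(\tfrac{1+\alpha}{2}\eta\big)^2+\tfrac{2\log\sigma}{\sigma^2-1}}\Big),$$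 $$\mathcal{R}_{rob}(f_{rob}\mid +1)=\Pr\Big(\mathcal{N}(0,1)<-A\big(\tfrac{1+\alpha}{2}\eta-\epsilon\big)+\sqrt{\big(\tfrac{A}{\sigma}\big)^2\big(\tfrac{1+\alpha}{2}\eta-\epsilon\big)^2+\tfrac{2\log\sigma}{\sigma^2-1}}\Big),$$ and consequently both $\mathcal{R}_{nat}(f_{nat}\mid +1)$ and $\mathcal{R}_{rob}(f_{rob}\mid +1)$ are monotonically decreasing functions of $\alpha$.
   Context: $\Pr(\mathcal{N}(0,1)<z)$ denotes the standard normal cumulative distribution function evaluated at $z$. $I$ is the $d\times d$ identity matrix. *)

theory Defs
  imports "HOL-Probability.Probability"
begin

definition Phi :: "real \<Rightarrow> real" where
  "Phi z = measure (density lborel std_normal_density) {..<z}"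

text \<open>Isotropic Gaussian N(m, s^2 I) on R^d (d = CARD('n)); s is the standard deviation.\<close>
definition gauss_vec :: "real^'n \<Rightarrow> real \<Rightarrow> (real^'n) measure" where
  "gauss_vec m s = density lborel (\<lambda>x. \<Prod>i\<in>UNIV. normal_density (m$i) s (x$i))"

definition clf :: "real^'n \<Rightarrow> real \<Rightarrow> real^'n \<Rightarrow> real" where
  "clf w b x = sgn (w \<bullet> x + b)"

definition muv :: "real \<Rightarrow> real^'n" where
  "muv eta = (\<chi> i. eta)"

definition cond_dist :: "real \<Rightarrow> real \<Rightarrow> real \<Rightarrow> real \<Rightarrow> (real^'n) measure" where
  "cond_dist eta sg alpha y =
     (if y = 1 then gauss_vec (muv eta) sg else gauss_vec (- (alpha *\<^sub>R muv eta)) 1)"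

definition nat_err_cond :: "real \<Rightarrow> real \<Rightarrow> real \<Rightarrow> real^'n \<Rightarrow> real \<Rightarrow> real \<Rightarrow> real" where
  "nat_err_cond eta sg alpha w b y =
     measure (cond_dist eta sg alpha y) {x. clf w b x \<noteq> y}"

definition rob_err_cond :: "real \<Rightarrow> real \<Rightarrow> real \<Rightarrow> real \<Rightarrow> real^'n \<Rightarrow> real \<Rightarrow> real \<Rightarrow> real" where
  "rob_err_cond eta sg alpha eps w b y =
     measure (cond_dist eta sg alpha y)
       {x. \<exists>\<delta>::real^'n. infnorm \<delta> \<le> eps \<and> clf w b (x + \<delta>) \<noteq> y}"

definition R_nat :: "real \<Rightarrow> real \<Rightarrow> real \<Rightarrow> real^'n \<Rightarrow> real \<Rightarrow> real" where
  "R_nat eta sg alpha w b =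
     1/2 * nat_err_cond eta sg alpha w b 1 + 1/2 * nat_err_cond eta sg alpha w b (-1)"

definition R_rob :: "real \<Rightarrow> real \<Rightarrow> real \<Rightarrow> real \<Rightarrow> real^'n \<Rightarrow> real \<Rightarrow> real" where
  "R_rob eta sg alpha eps w b =
     1/2 * rob_err_cond eta sg alpha eps w b 1 + 1/2 * rob_err_cond eta sg alpha eps w b (-1)"

definition nat_opt :: "real \<Rightarrow> real \<Rightarrow> real \<Rightarrow> real^'n \<Rightarrow> real \<Rightarrow> bool" where
  "nat_opt eta sg alpha w b \<longleftrightarrow> norm w = 1 \<and>
     (\<forall>(w'::real^'n) b'. norm w' = 1 \<longrightarrow> R_nat eta sg alpha w b \<le> R_nat eta sg alpha w' b')"

definition rob_opt :: "real \<Rightarrow> real \<Rightarrow> real \<Rightarrow> real \<Rightarrow> real^'n \<Rightarrow> real \<Rightarrow> bool" where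
  "rob_opt eta sg alpha eps w b \<longleftrightarrow> norm w = 1 \<and>
     (\<forall>(w'::real^'n) b'. norm w' = 1 \<longrightarrow> R_rob eta sg alpha eps w b \<le> R_rob eta sg alpha eps w' b')"

end

theory Submission
  imports Defs
begin

(* Projecting N(m, s^2 I) onto a unit vector w gives N(w.m, s^2), so every class-conditional error
   of sign(w.x + b) is a value of Phi. The worst l_inf perturbation of size eps moves w.x by
   eps |w|_1, so the errors on the two classes are Phi((-b - P w)/sg) and Phi(b - Q w) with
   P w = w.mu - eps |w|_1 and Q w = alpha w.mu - eps |w|_1; the standard error is the case eps = 0.
   Since w.mu <= eta |w|_1 <= eta sqrt d, both P and Q are maximised by the balanced unit vector
   (1,...,1)/sqrt d, and as Phi is strictly increasing every optimal classifier attains both maxima.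
   Its bias is then a critical point of b |-> Phi(-(b + P)/sg) + Phi(b - Q); the first-order condition
   is a quadratic equation of which only the smaller root is a minimum. This gives the closed form,
   which is strictly decreasing in the margin (1 + alpha) eta/2 - eps because its slope is at most
   -A + A/sg < 0. *)

section \<open>The standard normal distribution function\<close>

lemma Phi_eq_measure_atMost: "Phi z = measure std_normal_distribution {..z}"
proof -
  interpret real_distribution std_normal_distribution by (rule real_dist_normal_dist)
  have "AE x in lborel. x \<in> {z} \<longrightarrow> ennreal (std_normal_density x) = 0"
    using AE_lborel_singleton[of z] by eventually_elim auto
  then have "{z} \<in> null_sets std_normal_distribution"
    by (subst null_sets_density_iff) auto
  then have "measure std_normal_distribution ({..<z} \<union> {z}) = measure std_normal_distribution {..<z}"
    by (intro measure_Un_null_set) auto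
  moreover have "{..<z} \<union> {z} = {..z}" by auto
  ultimately show ?thesis by (simp add: Phi_def)
qed

lemma Phi_eq_add_integral:
  assumes "a \<le> z"
  shows "Phi z = Phi a + integral {a..z} std_normal_density"
proof -
  interpret real_distribution std_normal_distribution by (rule real_dist_normal_dist)
  have cont: "continuous_on {a..z} std_normal_density"
    by (auto simp: normal_density_def intro!: continuous_intros)
  have "emeasure std_normal_distribution {a..z} = ennreal (integral {a..z} std_normal_density)"
    using cont by (simp add: emeasure_density)
      (intro nn_integral_has_integral_lebesgue' integrable_integral integrable_continuous_interval, auto)
  then have "measure std_normal_distribution {a..z} = integral {a..z} std_normal_density"
    using cont by (simp add: measure_def integral_nonneg integrable_continuous_interval)
  moreover have "{..z} = {..<a} \<union> {a..z}" using assms by auto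
  moreover have "measure std_normal_distribution ({..<a} \<union> {a..z})
      = measure std_normal_distribution {..<a} + measure std_normal_distribution {a..z}"
    by (rule finite_measure_Union) auto
  ultimately show ?thesis by (simp add: Phi_eq_measure_atMost[of z] Phi_def[of a])
qed

lemma has_real_derivative_Phi: "(Phi has_real_derivative std_normal_density x) (at x)"
proof -
  have "((\<lambda>z. integral {x - 1..z} std_normal_density) has_real_derivative std_normal_density x)
      (at x within {x - 1..x + 1})"
    by (rule integral_has_real_derivative) (auto simp: normal_density_def intro!: continuous_intros)
  then have "((\<lambda>z. Phi (x - 1) + integral {x - 1..z} std_normal_density) has_real_derivative
      std_normal_density x) (at x)"
    by (auto simp: at_within_Icc_at intro!: derivative_eq_intros)
  then show ?thesis
    by (rule has_field_derivative_transform_within_open[where S = "{x - 1<..<x + 1}"])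
      (auto intro!: Phi_eq_add_integral[symmetric])
qed

lemma strict_mono_Phi: "strict_mono Phi"
  using DERIV_pos_imp_increasing has_real_derivative_Phi normal_density_pos
  by (metis strict_monoI zero_less_one)

lemma Phi_less_iff [simp]: "Phi a < Phi b \<longleftrightarrow> a < b"
  using strict_mono_Phi by (rule strict_mono_less)

lemma Phi_le_iff [simp]: "Phi a \<le> Phi b \<longleftrightarrow> a \<le> b"
  using strict_mono_Phi by (rule strict_mono_less_eq)

section \<open>Gaussian vectors and half-spaces\<close>

lemma measurable_vec_lambda_PiM [measurable]:
  "(\<lambda>f. \<chi> i. f i) \<in> PiM UNIV (\<lambda>_::'n::finite. borel) \<rightarrow>\<^sub>M (borel :: (real^'n) measure)"
proof (rule borel_measurable_euclidean_space[THEN iffD2], intro ballI)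
  fix b :: "real^'n" assume "b \<in> Basis"
  then obtain i where "b = axis i 1" by (auto simp: Basis_vec_def)
  then show "(\<lambda>f::'n\<Rightarrow>real. (\<chi> i. f i) \<bullet> b) \<in> borel_measurable (PiM UNIV (\<lambda>_. borel))"
    by (simp add: inner_axis)
qed

lemma lborel_vec_eq_distr_PiM:
  "(lborel :: (real^'n::finite) measure) = distr (PiM UNIV (\<lambda>_. lborel)) borel (\<lambda>f. \<chi> i. f i)"
proof (rule lborel_eqI)
  interpret product_sigma_finite "\<lambda>_::'n. (lborel::real measure)" by standard
  fix l u :: "real^'n" assume le: "\<And>b. b \<in> Basis \<Longrightarrow> l \<bullet> b \<le> u \<bullet> b"
  have le': "l$i \<le> u$i" for i using le[of "axis i 1"] by (auto simp: Basis_vec_def inner_axis)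
  have "(\<lambda>f. \<chi> i. f i) -` box l u \<inter> space (PiM UNIV (\<lambda>_. lborel)) = PiE UNIV (\<lambda>i. {l$i<..<u$i})"
    by (simp add: mem_box_cart space_PiM set_eq_iff PiE_iff)
  then have "emeasure (distr (PiM UNIV (\<lambda>_. lborel)) borel (\<lambda>f. \<chi> i. f i)) (box l u)
      = emeasure (PiM UNIV (\<lambda>_. lborel)) (PiE UNIV (\<lambda>i. {l$i<..<u$i}))"
    by (simp add: emeasure_distr)
  also have "\<dots> = (\<Prod>i\<in>UNIV. ennreal (u$i - l$i))"
    by (subst emeasure_PiM) (auto simp: le')
  also have "\<dots> = ennreal (\<Prod>i\<in>UNIV. u$i - l$i)"
    by (simp add: prod_ennreal le')
  also have "(\<Prod>i\<in>UNIV. u$i - l$i) = (\<Prod>b\<in>Basis. (u - l) \<bullet> b)"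
  proof -
    have "(\<Prod>b\<in>Basis. (u - l) \<bullet> b) = (\<Prod>b\<in>range (\<lambda>i. axis i (1::real)). (u - l) \<bullet> b)"
      by (simp add: Basis_vec_def) (metis UNION_singleton_eq_range)
    also have "\<dots> = (\<Prod>i\<in>UNIV. (u - l) \<bullet> axis i 1)"
      by (subst prod.reindex) (auto simp: inj_on_def axis_eq_axis)
    finally show ?thesis by (simp add: inner_axis)
  qed
  finally show "emeasure (distr (PiM UNIV (\<lambda>_. lborel)) borel (\<lambda>f. \<chi> i. f i)) (box l u)
      = (\<Prod>b\<in>Basis. (u - l) \<bullet> b)" .
qed simp

lemma PiM_normal_eq_density:
  fixes \<mu> :: "'i \<Rightarrow> real"
  assumes I: "finite I" and s: "s > 0"
  shows "PiM I (\<lambda>i. density lborel (normal_density (\<mu> i) s))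
    = density (PiM I (\<lambda>_. lborel)) (\<lambda>x. \<Prod>i\<in>I. ennreal (normal_density (\<mu> i) s (x i)))"
proof -
  interpret prob_space "density lborel (normal_density (\<mu> i) s)" for i
    using s by (rule prob_space_normal_density)
  interpret N: product_prob_space "\<lambda>i. density lborel (normal_density (\<mu> i) s)" I ..
  interpret L: product_sigma_finite "\<lambda>_::'i. (lborel::real measure)" by standard
  show ?thesis
  proof (rule N.PiM_eqI[symmetric])
    show "sets (density (PiM I (\<lambda>_. lborel)) (\<lambda>x. \<Prod>i\<in>I. ennreal (normal_density (\<mu> i) s (x i))))
      = sets (PiM I (\<lambda>i. density lborel (normal_density (\<mu> i) s)))"
      unfolding sets_density by (rule sets_PiM_cong) simp_all
    fix A assume "\<And>i. i \<in> I \<Longrightarrow> A i \<in> sets (density lborel (normal_density (\<mu> i) s))"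
    then have A: "A i \<in> sets borel" if "i \<in> I" for i using that by simp
    then have "PiE I A \<in> sets (PiM I (\<lambda>_. lborel))"
      using I by (intro sets_PiM_I_finite) auto
    then have "emeasure (density (PiM I (\<lambda>_. lborel)) (\<lambda>x. \<Prod>i\<in>I. ennreal (normal_density (\<mu> i) s (x i)))) (PiE I A)
       = (\<integral>\<^sup>+ x. (\<Prod>i\<in>I. ennreal (normal_density (\<mu> i) s (x i)) * indicator (A i) (x i)) \<partial>PiM I (\<lambda>_. lborel))"
      by (simp add: emeasure_density)
        (intro nn_integral_cong, auto simp: I indicator_def prod.distrib PiE_iff space_PiM)
    also have "\<dots> = (\<Prod>i\<in>I. emeasure (density lborel (normal_density (\<mu> i) s)) (A i))"
      using I A by (subst L.product_nn_integral_prod) (auto simp: emeasure_density)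
    finally show "emeasure (density (PiM I (\<lambda>_. lborel)) (\<lambda>x. \<Prod>i\<in>I. ennreal (normal_density (\<mu> i) s (x i)))) (PiE I A)
       = (\<Prod>i\<in>I. emeasure (density lborel (normal_density (\<mu> i) s)) (A i))" .
  qed (rule I)
qed

lemma gauss_vec_eq_distr_PiM:
  assumes "s > 0"
  shows "gauss_vec m s
    = distr (PiM UNIV (\<lambda>i. density lborel (normal_density (m$i) s))) borel (\<lambda>f::'n::finite \<Rightarrow> real. \<chi> i. f i)"
proof -
  have "gauss_vec m s = density (distr (PiM UNIV (\<lambda>_::'n. lborel)) borel (\<lambda>f. \<chi> i. f i))
          (\<lambda>x. ennreal (\<Prod>i\<in>UNIV. normal_density (m$i) s (x$i)))"
    unfolding gauss_vec_def by (simp flip: lborel_vec_eq_distr_PiM)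
  also have "\<dots> = distr (density (PiM UNIV (\<lambda>_. lborel))
          (\<lambda>f. ennreal (\<Prod>i\<in>UNIV. normal_density (m$i) s (f i)))) borel (\<lambda>f. \<chi> i. f i)"
    by (subst density_distr) auto
  finally show ?thesis using assms by (simp add: PiM_normal_eq_density prod_ennreal)
qed

lemma (in product_prob_space) indep_vars_components:
  assumes "I \<noteq> {}"
  shows "P.indep_vars M (\<lambda>i x. x i) I"
proof (subst P.indep_vars_iff_distr_eq_PiM')
  have "distr (PiM I M) (PiM I M) (\<lambda>x. \<lambda>i\<in>I. x i) = distr (PiM I M) (PiM I M) (\<lambda>x. x)"
    by (intro distr_cong) (auto simp: space_PiM)
  also have "\<dots> = PiM I (\<lambda>i. distr (PiM I M) (M i) (\<lambda>x. x i))"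
    by (auto intro!: PiM_cong simp: PiM_component)
  finally show "distr (PiM I M) (PiM I M) (\<lambda>x. \<lambda>i\<in>I. x i) = PiM I (\<lambda>i. distr (PiM I M) (M i) (\<lambda>x. x i))" .
qed (use assms in auto)

lemma distributed_PiM_normal_lincomb:
  fixes \<mu> c :: "'i \<Rightarrow> real"
  assumes I: "finite I" and s: "s > 0" and c: "\<exists>i\<in>I. c i \<noteq> 0"
  shows "distributed (PiM I (\<lambda>i. density lborel (normal_density (\<mu> i) s))) lborel
    (\<lambda>x. \<Sum>i\<in>I. c i * x i) (normal_density (\<Sum>i\<in>I. c i * \<mu> i) (s * sqrt (\<Sum>i\<in>I. (c i)\<^sup>2)))"
proof -
  interpret prob_space "density lborel (normal_density (\<mu> i) s)" for i
    using s by (rule prob_space_normal_density)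
  interpret P: product_prob_space "\<lambda>i. density lborel (normal_density (\<mu> i) s)" I ..
  let ?P = "PiM I (\<lambda>i. density lborel (normal_density (\<mu> i) s))"
  define J where "J = {i\<in>I. c i \<noteq> 0}"
  have J: "finite J" "J \<noteq> {}" "J \<subseteq> I" using I c by (auto simp: J_def)
  have proj: "(\<lambda>x. x i) \<in> borel_measurable ?P" if "i \<in> I" for i
    using measurable_component_singleton[OF that, of "\<lambda>i. density lborel (normal_density (\<mu> i) s)"]
    by simp
  have "P.indep_vars (\<lambda>i. density lborel (normal_density (\<mu> i) s)) (\<lambda>i x. x i) I"
    using J by (intro P.indep_vars_components) auto
  then have indep: "P.indep_vars (\<lambda>_. borel) (\<lambda>i x. c i * x i) J"
    by (intro P.indep_vars_compose2[OF P.indep_vars_subset, where Y = "\<lambda>i x. c i * x", of _ _ I])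
      (use J in auto)
  have "distributed ?P lborel (\<lambda>x. x i) (normal_density (\<mu> i) s)" if "i \<in> I" for i
  proof -
    have "distr ?P lborel (\<lambda>x. x i) = distr ?P (density lborel (normal_density (\<mu> i) s)) (\<lambda>x. x i)"
      by (intro distr_cong) auto
    also have "\<dots> = density lborel (normal_density (\<mu> i) s)"
      using that by (rule P.PiM_component)
    finally show ?thesis using that proj by (simp add: distributed_def)
  qed
  then have "distributed ?P lborel (\<lambda>x. c i * x i) (normal_density (c i * \<mu> i) (\<bar>c i\<bar> * s))"
    if "i \<in> J" for i
    using that P.normal_density_affine[of "\<lambda>x. x i" "\<mu> i" s "c i" 0] s by (auto simp: J_def)
  then have "distributed ?P lborel (\<lambda>x. \<Sum>i\<in>J. c i * x i)
      (normal_density (\<Sum>i\<in>J. c i * \<mu> i) (sqrt (\<Sum>i\<in>J. (\<bar>c i\<bar> * s)\<^sup>2)))"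
    using J indep s by (intro P.sum_indep_normal) (auto simp: J_def)
  moreover have "(\<lambda>x. \<Sum>i\<in>J. c i * x i) = (\<lambda>x. \<Sum>i\<in>I. c i * x i)"
    "(\<Sum>i\<in>J. c i * \<mu> i) = (\<Sum>i\<in>I. c i * \<mu> i)"
    using I by (auto intro!: sum.mono_neutral_left simp: J_def)
  moreover have "sqrt (\<Sum>i\<in>J. (\<bar>c i\<bar> * s)\<^sup>2) = s * sqrt (\<Sum>i\<in>I. (c i)\<^sup>2)"
  proof -
    have "(\<Sum>i\<in>J. (\<bar>c i\<bar> * s)\<^sup>2) = s\<^sup>2 * (\<Sum>i\<in>I. (c i)\<^sup>2)"
      using I by (auto intro!: sum.mono_neutral_left simp: J_def power_mult_distrib sum_distrib_left mult.commute)
    then show ?thesis using s by (simp add: real_sqrt_mult)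
  qed
  ultimately show ?thesis by simp
qed

lemma
  fixes m w :: "real^'n::finite"
  assumes s: "s > 0"
  shows prob_space_gauss_vec: "prob_space (gauss_vec m s)"
    and distributed_inner_gauss_vec:
      "w \<noteq> 0 \<Longrightarrow> distributed (gauss_vec m s) lborel (\<lambda>x. w \<bullet> x) (normal_density (w \<bullet> m) (s * norm w))"
proof -
  interpret prob_space "density lborel (normal_density (m$i) s)" for i
    using s by (rule prob_space_normal_density)
  interpret P: product_prob_space "\<lambda>i. density lborel (normal_density (m$i) s)" UNIV ..
  let ?P = "PiM UNIV (\<lambda>i. density lborel (normal_density (m$i) s))"
  have "sets ?P = sets (PiM UNIV (\<lambda>_. borel))"
    by (intro sets_PiM_cong) simp_all
  then have vec: "(\<lambda>f. \<chi> i. f i) \<in> ?P \<rightarrow>\<^sub>M borel"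
    by (subst measurable_cong_sets[OF _ refl]) (use measurable_vec_lambda_PiM in auto)
  then show "prob_space (gauss_vec m s)"
    unfolding gauss_vec_eq_distr_PiM[OF s] by (rule P.prob_space_distr)
  assume "w \<noteq> 0"
  then have "\<exists>i\<in>UNIV. w$i \<noteq> 0" by (auto simp: vec_eq_iff)
  from distributed_PiM_normal_lincomb[OF finite_class.finite_UNIV s this, of "\<lambda>i. m$i"]
  have "distributed ?P lborel (\<lambda>f. w \<bullet> (\<chi> i. f i)) (normal_density (w \<bullet> m) (s * norm w))"
    by (simp add: inner_vec_def norm_vec_def L2_set_def)
  moreover have "distr (distr ?P borel (\<lambda>f. \<chi> i. f i)) lborel (\<lambda>x. w \<bullet> x)
      = distr ?P lborel (\<lambda>f. w \<bullet> (\<chi> i. f i))"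
    using vec by (subst distr_distr) (auto simp: comp_def)
  ultimately show "distributed (gauss_vec m s) lborel (\<lambda>x. w \<bullet> x) (normal_density (w \<bullet> m) (s * norm w))"
    unfolding gauss_vec_eq_distr_PiM[OF s] distributed_def by simp
qed

lemma space_gauss_vec [simp]: "space (gauss_vec m s) = UNIV"
  by (simp add: gauss_vec_def)

lemma measure_gauss_vec_halfspace:
  fixes m w :: "real^'n::finite"
  assumes s: "s > 0" and w: "w \<noteq> 0"
  shows "measure (gauss_vec m s) {x. w \<bullet> x \<le> c} = Phi ((c - w \<bullet> m) / (s * norm w))"
proof -
  interpret prob_space "gauss_vec m s" using s by (rule prob_space_gauss_vec)
  let ?Z = "\<lambda>x. (w \<bullet> x - w \<bullet> m) / (s * norm w)"
  have sw: "s * norm w > 0" using s w by simp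
  then have Z: "distributed (gauss_vec m s) lborel ?Z std_normal_density"
    using distributed_inner_gauss_vec[OF s w] normal_standard_normal_convert by blast
  have "{x. w \<bullet> x \<le> c} = ?Z -` {..(c - w \<bullet> m) / (s * norm w)} \<inter> space (gauss_vec m s)"
    using sw by (auto simp: space_gauss_vec divide_le_cancel)
  also have "measure (gauss_vec m s) \<dots> = measure (distr (gauss_vec m s) lborel ?Z) {..(c - w \<bullet> m) / (s * norm w)}"
    using Z by (intro measure_distr[symmetric]) (auto simp: distributed_def)
  also have "\<dots> = Phi ((c - w \<bullet> m) / (s * norm w))"
    using Z by (simp add: distributed_distr_eq_density Phi_eq_measure_atMost)
  finally show ?thesis .
qed

section \<open>The optimal bias\<close>

lemma std_normal_density_scaled_shift:
  assumes "s > 0"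
  shows "s * std_normal_density (s * u - T)
    = std_normal_density u * exp (- ((s * u - T)\<^sup>2 - u\<^sup>2 - 2 * ln s) / 2)"
proof -
  have "- ((s * u - T)\<^sup>2 - u\<^sup>2 - 2 * ln s) / 2 = (- (s * u - T)\<^sup>2 / 2 + u\<^sup>2 / 2) + ln s"
    by (simp add: field_simps)
  then have "exp (- ((s * u - T)\<^sup>2 - u\<^sup>2 - 2 * ln s) / 2) = exp (- (s * u - T)\<^sup>2 / 2) * exp (u\<^sup>2 / 2) * s"
    by (simp only: exp_add exp_ln[OF assms])
  moreover have "exp (- u\<^sup>2 / 2) * exp (u\<^sup>2 / 2) = 1"
    by (simp add: exp_add[symmetric])
  ultimately show ?thesis
    by (simp add: normal_density_def)
qed

lemma square_shift_diff_factor: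
  fixes s T u :: real
  assumes "s > 1"
  defines "D \<equiv> sqrt (T\<^sup>2 + 2 * (s\<^sup>2 - 1) * ln s)"
  shows "(s * u - T)\<^sup>2 - u\<^sup>2 - 2 * ln s
    = (s\<^sup>2 - 1) * (u - (T * s - D) / (s\<^sup>2 - 1)) * (u - (T * s + D) / (s\<^sup>2 - 1))"
proof -
  define k where "k = s\<^sup>2 - 1"
  have k: "k > 0" using assms by (simp add: k_def power2_eq_square less_1_mult)
  have D2: "D\<^sup>2 = T\<^sup>2 + 2 * k * ln s"
    unfolding D_def k_def using k assms by (intro real_sqrt_pow2) (simp add: k_def)
  have "k * (u - (T * s - D) / k) * (u - (T * s + D) / k) = (k * u - (T * s - D)) * (k * u - (T * s + D)) / k"
    using k by (simp add: field_simps)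
  also have "(k * u - (T * s - D)) * (k * u - (T * s + D)) = (k * u - T * s)\<^sup>2 - D\<^sup>2"
    by (simp add: power2_eq_square algebra_simps)
  also have "\<dots> = k * ((s * u - T)\<^sup>2 - u\<^sup>2 - 2 * ln s)"
    unfolding D2 by (simp add: k_def power2_eq_square algebra_simps)
  finally show ?thesis using k by (simp add: k_def)
qed

lemma has_real_derivative_Phi_sum:
  assumes "s > 0"
  shows "((\<lambda>u. Phi (- u) + Phi (s * u - T)) has_real_derivative
    std_normal_density u * (exp (- ((s * u - T)\<^sup>2 - u\<^sup>2 - 2 * ln s) / 2) - 1)) (at u)"
proof -
  have "((\<lambda>u. Phi (- u)) has_real_derivative std_normal_density (- u) * (- 1)) (at u)"
    by (rule DERIV_chain2[OF has_real_derivative_Phi]) (auto intro!: derivative_eq_intros)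
  moreover have "((\<lambda>u. Phi (s * u - T)) has_real_derivative std_normal_density (s * u - T) * s) (at u)"
    by (rule DERIV_chain2[OF has_real_derivative_Phi]) (auto intro!: derivative_eq_intros)
  ultimately have "((\<lambda>u. Phi (- u) + Phi (s * u - T)) has_real_derivative
      std_normal_density (- u) * (- 1) + std_normal_density (s * u - T) * s) (at u)"
    by (rule DERIV_add)
  moreover have "std_normal_density (- u) = std_normal_density u"
    by (simp add: normal_density_def)
  ultimately show ?thesis
    using std_normal_density_scaled_shift[OF assms, of u T] by (simp add: algebra_simps)
qed

lemma Phi_sum_minimizer_eq:
  fixes s T u0 :: real
  assumes s: "s > 1"
    and min: "\<And>u. Phi (- u0) + Phi (s * u0 - T) \<le> Phi (- u) + Phi (s * u - T)"
  shows "u0 = (T * s - sqrt (T\<^sup>2 + 2 * (s\<^sup>2 - 1) * ln s)) / (s\<^sup>2 - 1)"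
proof -
  define D where "D = sqrt (T\<^sup>2 + 2 * (s\<^sup>2 - 1) * ln s)"
  define lo where "lo = (T * s - D) / (s\<^sup>2 - 1)"
  define hi where "hi = (T * s + D) / (s\<^sup>2 - 1)"
  define E where "E u = (s * u - T)\<^sup>2 - u\<^sup>2 - 2 * ln s" for u
  define g where "g u = Phi (- u) + Phi (s * u - T)" for u
  have s2: "s\<^sup>2 - 1 > 0" using s by (simp add: power2_eq_square less_1_mult)
  have "D \<ge> 0" using s2 s by (simp add: D_def)
  then have "lo \<le> hi" using s2 by (simp add: lo_def hi_def divide_right_mono)
  have E: "E u = (s\<^sup>2 - 1) * (u - lo) * (u - hi)" for u
    unfolding E_def lo_def hi_def D_def using s by (rule square_shift_diff_factor)
  have dg: "(g has_real_derivative std_normal_density u * (exp (- E u / 2) - 1)) (at u)" for u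
    unfolding g_def E_def using s by (intro has_real_derivative_Phi_sum) simp
  have "std_normal_density u0 * (exp (- E u0 / 2) - 1) = 0"
    using dg by (rule DERIV_local_min[of _ _ _ 1]) (auto simp: g_def min)
  then have "E u0 = 0" using normal_density_pos[of 1 0 u0] by simp
  then have "u0 = lo \<or> u0 = hi" using s2 by (simp add: E)
  moreover have "u0 \<noteq> hi" \<comment> \<open>to the right of the larger root g decreases\<close>
  proof
    assume "u0 = hi"
    have "g (u0 + 1) < g u0"
    proof (rule DERIV_neg_imp_decreasing_open[of u0 "u0 + 1" g])
      fix u assume "u0 < u" "u < u0 + 1"
      then have "E u > 0" using \<open>u0 = hi\<close> \<open>lo \<le> hi\<close> s2 by (simp add: E)
      then have "std_normal_density u * (exp (- E u / 2) - 1) < 0"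
        using normal_density_pos[of 1 0 u] by (simp add: mult_pos_neg)
      with dg show "\<exists>y. (g has_real_derivative y) (at u) \<and> y < 0" by blast
    next
      show "continuous_on {u0..u0 + 1} g"
        using dg by (intro has_real_derivative_imp_continuous_on) blast
    qed simp
    moreover have "g u0 \<le> g (u0 + 1)" unfolding g_def by (rule min)
    ultimately show False by simp
  qed
  ultimately show ?thesis by (simp add: lo_def D_def)
qed

(* The value of (b + P w)/sg at the optimal bias, written with A = 2 sqrt d sg / (sg^2 - 1) and the
   margin c = (1 + alpha) eta/2 - eps; the closed form of the theorem is Phi (- opt_margin A sg c). *)
definition opt_margin :: "real \<Rightarrow> real \<Rightarrow> real \<Rightarrow> real" where
  "opt_margin A s c = A * c - sqrt ((A / s)\<^sup>2 * c\<^sup>2 + 2 * ln s / (s\<^sup>2 - 1))"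

lemma Phi_sum_minimizer_eq_opt_margin:
  fixes r c s :: real
  assumes s: "s > 1"
  shows "(2 * r * c * s - sqrt ((2 * r * c)\<^sup>2 + 2 * (s\<^sup>2 - 1) * ln s)) / (s\<^sup>2 - 1)
    = opt_margin (2 * r * s / (s\<^sup>2 - 1)) s c"
proof -
  define k where "k = s\<^sup>2 - 1"
  have k: "k > 0" using s by (simp add: k_def power2_eq_square less_1_mult)
  have "((2 * r * s / k) / s)\<^sup>2 * c\<^sup>2 + 2 * ln s / k = ((2 * r * c)\<^sup>2 + 2 * k * ln s) / k\<^sup>2"
    using k s by (simp add: field_simps power2_eq_square)
  then have "sqrt (((2 * r * s / k) / s)\<^sup>2 * c\<^sup>2 + 2 * ln s / k) = sqrt ((2 * r * c)\<^sup>2 + 2 * k * ln s) / k"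
    using k by (simp add: real_sqrt_divide)
  then show ?thesis
    using k by (simp add: opt_margin_def k_def[symmetric] diff_divide_distrib mult.commute mult.left_commute)
qed

lemma strict_mono_opt_margin:
  assumes A: "A > 0" and s: "s > 1"
  shows "strict_mono (opt_margin A s)"
proof (rule strict_monoI)
  fix c1 c2 :: real assume "c1 < c2"
  define K where "K = 2 * ln s / (s\<^sup>2 - 1)"
  have "K \<ge> 0" using s by (simp add: K_def power2_eq_square less_1_mult less_imp_le)
  have "A / s * c1 + A / s * (c2 - c1) = A / s * c2" by (simp only: distrib_left[symmetric]) simp
  moreover have "sqrt ((A / s * (c2 - c1))\<^sup>2 + 0\<^sup>2) = A / s * (c2 - c1)"
    using A s \<open>c1 < c2\<close> by simp
  moreover have "(sqrt K + 0)\<^sup>2 = K" "(sqrt K)\<^sup>2 = K" using \<open>K \<ge> 0\<close> by simp_all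
  ultimately have "sqrt ((A / s * c2)\<^sup>2 + K) \<le> sqrt ((A / s * c1)\<^sup>2 + K) + A / s * (c2 - c1)"
    using real_sqrt_sum_squares_triangle_ineq[of "A / s * c1" "A / s * (c2 - c1)" "sqrt K" 0]
    by simp
  then have "sqrt ((A / s)\<^sup>2 * c2\<^sup>2 + K) \<le> sqrt ((A / s)\<^sup>2 * c1\<^sup>2 + K) + A / s * (c2 - c1)"
    by (simp only: power_mult_distrib)
  moreover have "A / s * (c2 - c1) < A * (c2 - c1)"
    using A s \<open>c1 < c2\<close> by (simp add: divide_less_eq)
  ultimately show "opt_margin A s c1 < opt_margin A s c2"
    by (simp add: opt_margin_def K_def algebra_simps)
qed

lemma optimal_pos_err_eq:
  fixes P Q :: "'w \<Rightarrow> real"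
  assumes s: "s > 1" and w0: "w0 \<in> W" and w: "w \<in> W"
    and bound: "\<And>v. v \<in> W \<Longrightarrow> P v \<le> P w0 \<and> Q v \<le> Q w0"
    and opt: "\<And>v b'. v \<in> W \<Longrightarrow>
      Phi ((- b - P w) / s) + Phi (b - Q w) \<le> Phi ((- b' - P v) / s) + Phi (b' - Q v)"
    and T: "P w0 + Q w0 = 2 * r * c"
  shows "Phi ((- b - P w) / s) = Phi (- opt_margin (2 * r * s / (s\<^sup>2 - 1)) s c)"
proof -
  have s0: "s > 0" using s by simp
  have PQ: "P w = P w0 \<and> Q w = Q w0"
  proof (rule ccontr)
    assume ne: "\<not> (P w = P w0 \<and> Q w = Q w0)"
    have le: "(- b - P w0) / s \<le> (- b - P w) / s" "b - Q w0 \<le> b - Q w"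
      using bound[OF w] s0 by (simp_all add: divide_right_mono)
    have "(- b - P w0) / s < (- b - P w) / s \<or> b - Q w0 < b - Q w"
      using bound[OF w] ne s0 by (auto simp: divide_strict_right_mono)
    then have "Phi ((- b - P w0) / s) + Phi (b - Q w0) < Phi ((- b - P w) / s) + Phi (b - Q w)"
      using le by (auto intro: add_less_le_mono add_le_less_mono)
    with opt[OF w0, of b] show False by simp
  qed
  let ?T = "P w0 + Q w0"
  have neg: "(- b - P w) / s = - ((b + P w0) / s)" using PQ by (simp add: minus_divide_left)
  have "Phi (- ((b + P w0) / s)) + Phi (s * ((b + P w0) / s) - ?T) \<le> Phi (- u) + Phi (s * u - ?T)" for u
  proof -
    have "b - Q w = s * ((b + P w0) / s) - ?T"
      "(- (s * u - P w0) - P w0) / s = - u" "s * u - P w0 - Q w0 = s * u - ?T"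
      using PQ s0 by (simp_all add: field_simps)
    then show ?thesis using opt[OF w0, of "s * u - P w0"] by (simp only: neg)
  qed
  then have "(b + P w0) / s = (?T * s - sqrt (?T\<^sup>2 + 2 * (s\<^sup>2 - 1) * ln s)) / (s\<^sup>2 - 1)"
    by (rule Phi_sum_minimizer_eq[OF s])
  then have "(b + P w0) / s = opt_margin (2 * r * s / (s\<^sup>2 - 1)) s c"
    using Phi_sum_minimizer_eq_opt_margin[OF s, of r c] by (simp add: T mult.assoc)
  then show ?thesis by (simp only: neg)
qed

section \<open>Errors of linear classifiers\<close>

definition l1_norm :: "real^'n::finite \<Rightarrow> real" where
  "l1_norm w = (\<Sum>i\<in>UNIV. \<bar>w$i\<bar>)"

lemma l1_norm_uminus [simp]: "l1_norm (- w) = l1_norm w"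
  by (simp add: l1_norm_def)

lemma l1_norm_le_sqrt_card: "l1_norm (w::real^'n::finite) \<le> sqrt CARD('n) * norm w"
proof -
  have "l1_norm w = (\<chi> i. \<bar>w$i\<bar>) \<bullet> (\<chi> i::'n. (1::real))"
    by (simp add: l1_norm_def inner_vec_def)
  also have "\<dots> \<le> norm (\<chi> i. \<bar>w$i\<bar>) * norm (\<chi> i::'n. (1::real))"
    by (rule norm_cauchy_schwarz)
  also have "norm (\<chi> i. \<bar>w$i\<bar>) = norm w"
    by (simp add: norm_vec_def)
  also have "norm (\<chi> i::'n. (1::real)) = sqrt CARD('n)"
    by (simp add: norm_eq_sqrt_inner inner_vec_def)
  finally show ?thesis by (simp add: mult.commute)
qed

lemma abs_inner_le_infnorm_l1_norm: "\<bar>w \<bullet> d\<bar> \<le> infnorm d * l1_norm (w::real^'n::finite)"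
proof -
  have "\<bar>w \<bullet> d\<bar> \<le> (\<Sum>i\<in>UNIV. \<bar>w$i * d$i\<bar>)"
    unfolding inner_vec_def inner_real_def by (rule sum_abs)
  also have "\<dots> \<le> (\<Sum>i\<in>UNIV. \<bar>w$i\<bar> * infnorm d)"
    using component_le_infnorm_cart[of d] by (intro sum_mono) (simp add: abs_mult mult_left_mono)
  finally show ?thesis by (simp add: l1_norm_def sum_distrib_left mult.commute)
qed

lemma inner_muv_le_l1_norm:
  assumes "eta \<ge> 0"
  shows "w \<bullet> muv eta \<le> eta * l1_norm w"
proof -
  have "w \<bullet> muv eta = (\<Sum>i\<in>UNIV. eta * w$i)"
    by (simp add: inner_vec_def muv_def mult.commute)
  also have "\<dots> \<le> (\<Sum>i\<in>UNIV. eta * \<bar>w$i\<bar>)"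
    using assms by (intro sum_mono mult_left_mono) simp_all
  finally show ?thesis by (simp add: l1_norm_def sum_distrib_left)
qed

lemma robust_margin_le_balanced:
  fixes v :: "real^'n::finite"
  assumes "norm v = 1" "k \<ge> 0" "eta \<ge> 0" "eps \<le> k * eta"
  shows "k * (v \<bullet> muv eta) - eps * l1_norm v \<le> (k * eta - eps) * sqrt CARD('n)"
proof -
  have "k * (v \<bullet> muv eta) \<le> k * (eta * l1_norm v)"
    using assms by (intro mult_left_mono inner_muv_le_l1_norm)
  moreover have "(k * eta - eps) * l1_norm v \<le> (k * eta - eps) * sqrt CARD('n)"
    using l1_norm_le_sqrt_card[of v] assms by (intro mult_left_mono) auto
  ultimately show ?thesis by (simp add: algebra_simps)
qed

lemma balanced_unit_vector:
  defines "u \<equiv> \<chi> i::'n::finite. 1 / sqrt CARD('n)"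
  shows "norm u = 1" "l1_norm u = sqrt CARD('n)" "u \<bullet> muv eta = eta * sqrt CARD('n)"
proof -
  have d: "real CARD('n) > 0" by simp
  show "norm u = 1"
    using d by (simp add: u_def norm_eq_sqrt_inner inner_vec_def power_divide flip: power2_eq_square)
  show "l1_norm u = sqrt CARD('n)"
    using d by (simp add: u_def l1_norm_def real_div_sqrt)
  show "u \<bullet> muv eta = eta * sqrt CARD('n)"
    using d by (simp add: u_def muv_def inner_vec_def real_div_sqrt flip: times_divide_eq_left)
qed

lemma worst_case_perturbation:
  fixes w x :: "real^'n::finite"
  assumes "e \<ge> 0"
  shows "(\<exists>d. infnorm d \<le> e \<and> w \<bullet> (x + d) \<le> t) \<longleftrightarrow> w \<bullet> x \<le> t + e * l1_norm w"
proof
  assume "\<exists>d. infnorm d \<le> e \<and> w \<bullet> (x + d) \<le> t"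
  then obtain d where "infnorm d \<le> e" "w \<bullet> x + w \<bullet> d \<le> t" by (auto simp: inner_add_right)
  moreover have "- (infnorm d * l1_norm w) \<le> w \<bullet> d"
    using abs_inner_le_infnorm_l1_norm[of w d] by linarith
  moreover have "infnorm d * l1_norm w \<le> e * l1_norm w"
    using \<open>infnorm d \<le> e\<close> by (intro mult_right_mono) (auto simp: l1_norm_def)
  ultimately show "w \<bullet> x \<le> t + e * l1_norm w" by linarith
next
  assume x: "w \<bullet> x \<le> t + e * l1_norm w"
  define d :: "real^'n" where "d = (\<chi> i. - e * sgn (w$i))"
  have "infnorm d \<le> e"
    unfolding infnorm_cart d_def using assms by (intro cSup_least) (auto simp: abs_mult abs_sgn_eq)
  moreover have "w \<bullet> d = - e * l1_norm w"
    by (auto simp: d_def inner_vec_def l1_norm_def sum_distrib_left sgn_if intro!: sum.cong)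
  ultimately show "\<exists>d. infnorm d \<le> e \<and> w \<bullet> (x + d) \<le> t"
    using x by (intro exI[of _ d]) (simp add: inner_add_right)
qed

lemma clf_ne_one_iff: "clf w b x \<noteq> 1 \<longleftrightarrow> w \<bullet> x \<le> - b"
  by (auto simp: clf_def sgn_if)

lemma clf_ne_minus_one_iff: "clf w b x \<noteq> - 1 \<longleftrightarrow> (- w) \<bullet> x \<le> b"
  by (auto simp: clf_def sgn_if)

lemma rob_err_cond_pos:
  fixes w :: "real^'n::finite"
  assumes "sg > 0" "norm w = 1" "eps \<ge> 0"
  shows "rob_err_cond eta sg alpha eps w b 1 = Phi ((- b - (w \<bullet> muv eta - eps * l1_norm w)) / sg)"
proof -
  have "{x. \<exists>d. infnorm d \<le> eps \<and> clf w b (x + d) \<noteq> 1} = {x. w \<bullet> x \<le> - b + eps * l1_norm w}"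
    using assms(3) by (simp add: clf_ne_one_iff worst_case_perturbation)
  then have "rob_err_cond eta sg alpha eps w b 1
      = measure (gauss_vec (muv eta) sg) {x. w \<bullet> x \<le> - b + eps * l1_norm w}"
    by (simp add: rob_err_cond_def cond_dist_def)
  also have "\<dots> = Phi ((- b + eps * l1_norm w - w \<bullet> muv eta) / (sg * norm w))"
    using assms by (intro measure_gauss_vec_halfspace) auto
  finally show ?thesis using assms(2) by (simp add: algebra_simps)
qed

lemma rob_err_cond_neg:
  fixes w :: "real^'n::finite"
  assumes "norm w = 1" "eps \<ge> 0"
  shows "rob_err_cond eta sg alpha eps w b (- 1) = Phi (b - (alpha * (w \<bullet> muv eta) - eps * l1_norm w))"
proof -
  have "{x. \<exists>d. infnorm d \<le> eps \<and> clf w b (x + d) \<noteq> - 1} = {x. (- w) \<bullet> x \<le> b + eps * l1_norm (- w)}"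
    using assms(2) by (simp add: clf_ne_minus_one_iff worst_case_perturbation del: inner_minus_left)
  then have "rob_err_cond eta sg alpha eps w b (- 1)
      = measure (gauss_vec (- (alpha *\<^sub>R muv eta)) 1) {x. (- w) \<bullet> x \<le> b + eps * l1_norm w}"
    by (simp add: rob_err_cond_def cond_dist_def del: inner_minus_left)
  also have "\<dots> = Phi ((b + eps * l1_norm w - (- w) \<bullet> (- (alpha *\<^sub>R muv eta))) / (1 * norm (- w)))"
    using assms by (intro measure_gauss_vec_halfspace) auto
  finally show ?thesis using assms(1) by (simp add: algebra_simps)
qed

lemma rob_err_cond_zero:
  fixes w :: "real^'n::finite"
  shows "rob_err_cond eta sg alpha 0 w b y = nat_err_cond eta sg alpha w b y"
proof -
  have "infnorm d \<le> 0 \<longleftrightarrow> d = 0" for d :: "real^'n"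
    using infnorm_pos_le[of d] infnorm_eq_0[of d] by linarith
  then show ?thesis by (simp add: rob_err_cond_def nat_err_cond_def)
qed

lemma rob_opt_zero_iff_nat_opt: "rob_opt eta sg alpha 0 w b \<longleftrightarrow> nat_opt eta sg alpha w b"
  by (simp add: rob_opt_def nat_opt_def R_rob_def R_nat_def rob_err_cond_zero)

lemma rob_err_cond_pos_of_rob_opt:
  fixes w :: "real^'n::finite"
  assumes sg: "sg > 1" and alpha: "alpha \<ge> 0"
    and eps: "0 \<le> eps" "eps \<le> eta" "eps \<le> alpha * eta"
    and opt: "rob_opt eta sg alpha eps w b"
  shows "rob_err_cond eta sg alpha eps w b 1
    = Phi (- opt_margin (2 * sqrt CARD('n) * sg / (sg\<^sup>2 - 1)) sg ((1 + alpha) / 2 * eta - eps))"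
proof -
  define r where "r = sqrt CARD('n)"
  define w0 :: "real^'n" where "w0 = (\<chi> i. 1 / r)"
  define P where "P v = v \<bullet> muv eta - eps * l1_norm v" for v :: "real^'n"
  define Q where "Q v = alpha * (v \<bullet> muv eta) - eps * l1_norm v" for v :: "real^'n"
  have sg0: "sg > 0" using sg by simp
  have w: "norm w = 1" using opt by (simp add: rob_opt_def)
  have R: "R_rob eta sg alpha eps v b' = (Phi ((- b' - P v) / sg) + Phi (b' - Q v)) / 2"
    if "norm v = 1" for v b'
    using that sg0 eps by (simp add: R_rob_def rob_err_cond_pos rob_err_cond_neg P_def Q_def)
  have w0: "norm w0 = 1" "P w0 = (eta - eps) * r" "Q w0 = (alpha * eta - eps) * r"
    using balanced_unit_vector(1,2)[where 'n = 'n] balanced_unit_vector(3)[where 'n = 'n, of eta]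
    by (simp_all add: w0_def r_def P_def Q_def algebra_simps)
  have bound: "P v \<le> P w0 \<and> Q v \<le> Q w0" if "norm v = 1" for v
    using robust_margin_le_balanced[OF that, of 1 eta eps] robust_margin_le_balanced[OF that alpha, of eta eps]
      eps unfolding w0(2,3) by (simp add: P_def Q_def r_def)
  have opt': "Phi ((- b - P w) / sg) + Phi (b - Q w) \<le> Phi ((- b' - P v) / sg) + Phi (b' - Q v)"
    if "v \<in> {v. norm v = 1}" for v b'
  proof -
    have "R_rob eta sg alpha eps w b \<le> R_rob eta sg alpha eps v b'"
      using opt that by (simp add: rob_opt_def)
    then show ?thesis using that w by (simp add: R)
  qed
  have "P w0 + Q w0 = 2 * r * ((1 + alpha) / 2 * eta - eps)"
    by (simp add: w0 algebra_simps)
  from optimal_pos_err_eq[where W = "{v. norm v = 1}", OF sg _ _ _ opt' this]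
  have "Phi ((- b - P w) / sg) = Phi (- opt_margin (2 * r * sg / (sg\<^sup>2 - 1)) sg ((1 + alpha) / 2 * eta - eps))"
    using w w0 bound by simp
  then show ?thesis
    using rob_err_cond_pos[OF sg0 w eps(1)] by (simp add: r_def P_def)
qed

lemma nat_err_cond_pos_of_nat_opt:
  fixes w :: "real^'n::finite"
  assumes "sg > 1" "alpha \<ge> 0" "eta \<ge> 0" "nat_opt eta sg alpha w b"
  shows "nat_err_cond eta sg alpha w b 1
    = Phi (- opt_margin (2 * sqrt CARD('n) * sg / (sg\<^sup>2 - 1)) sg ((1 + alpha) / 2 * eta))"
  using rob_err_cond_pos_of_rob_opt[of sg alpha 0 eta w b] assms
  by (simp add: rob_opt_zero_iff_nat_opt rob_err_cond_zero)

theorem theorem1: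
  fixes eta sg alpha eps :: real
  assumes "eta > 0" and "sg > 1" and "alpha \<ge> 1" and "0 < eps" and "eps < eta"
  defines "A \<equiv> 2 * sqrt (real CARD('n)) * sg / (sg\<^sup>2 - 1)"
  shows
    "(\<forall>(w::real^'n) b. nat_opt eta sg alpha w b \<longrightarrow>
        nat_err_cond eta sg alpha w b 1 =
          Phi (- A * ((1 + alpha) / 2 * eta)
               + sqrt ((A / sg)\<^sup>2 * ((1 + alpha) / 2 * eta)\<^sup>2 + 2 * ln sg / (sg\<^sup>2 - 1))))
   \<and> (\<forall>(w::real^'n) b. rob_opt eta sg alpha eps w b \<longrightarrow>
        rob_err_cond eta sg alpha eps w b 1 =
          Phi (- A * ((1 + alpha) / 2 * eta - eps)
               + sqrt ((A / sg)\<^sup>2 * ((1 + alpha) / 2 * eta - eps)\<^sup>2 + 2 * ln sg / (sg\<^sup>2 - 1))))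
   \<and> (\<forall>a1 a2 (w1::real^'n) b1 (w2::real^'n) b2. 1 \<le> a1 \<longrightarrow> a1 < a2 \<longrightarrow>
        nat_opt eta sg a1 w1 b1 \<longrightarrow> nat_opt eta sg a2 w2 b2 \<longrightarrow>
        nat_err_cond eta sg a2 w2 b2 1 < nat_err_cond eta sg a1 w1 b1 1)
   \<and> (\<forall>a1 a2 (w1::real^'n) b1 (w2::real^'n) b2. 1 \<le> a1 \<longrightarrow> a1 < a2 \<longrightarrow>
        rob_opt eta sg a1 eps w1 b1 \<longrightarrow> rob_opt eta sg a2 eps w2 b2 \<longrightarrow>
        rob_err_cond eta sg a2 eps w2 b2 1 < rob_err_cond eta sg a1 eps w1 b1 1)"
proof -
  have "sg\<^sup>2 - 1 > 0" using assms(2) by (simp add: power2_eq_square less_1_mult)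
  then have "A > 0" unfolding A_def using assms(2) by simp
  then have mono: "opt_margin A sg c1 < opt_margin A sg c2" if "c1 < c2" for c1 c2
    using strict_mono_opt_margin[OF _ assms(2)] that by (simp add: strict_mono_less)
  have eta_mono: "(1 + a1) / 2 * eta < (1 + a2) / 2 * eta" if "a1 < a2" for a1 a2
    using that assms(1) by (simp add: divide_strict_right_mono)
  have eps: "0 \<le> eps" "eps \<le> eta" using assms(4,5) by simp_all
  have eps_le: "eps \<le> a * eta" if "1 \<le> a" for a
  proof -
    have "1 * eta \<le> a * eta" using that assms(1) by (intro mult_right_mono) auto
    then show ?thesis using assms(5) by simp
  qed
  note nat = nat_err_cond_pos_of_nat_opt[where 'n = 'n, OF assms(2), folded A_def]
  note rob = rob_err_cond_pos_of_rob_opt[where 'n = 'n, OF assms(2) _ eps, folded A_def]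
  have margin: "Phi (- opt_margin A sg c) = Phi (- A * c + sqrt ((A / sg)\<^sup>2 * c\<^sup>2 + 2 * ln sg / (sg\<^sup>2 - 1)))"
    for c by (simp add: opt_margin_def)
  show ?thesis
    unfolding margin[symmetric]
  proof (intro conjI allI impI)
    fix a1 a2 b1 b2 :: real and w1 w2 :: "real^'n"
    assume a: "1 \<le> a1" "a1 < a2"
    show "nat_err_cond eta sg a2 w2 b2 1 < nat_err_cond eta sg a1 w1 b1 1"
      if "nat_opt eta sg a1 w1 b1" "nat_opt eta sg a2 w2 b2"
      using that a assms(1) eta_mono[OF a(2)] by (simp add: nat mono)
    show "rob_err_cond eta sg a2 eps w2 b2 1 < rob_err_cond eta sg a1 eps w1 b1 1"
      if "rob_opt eta sg a1 eps w1 b1" "rob_opt eta sg a2 eps w2 b2"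
      using that a eta_mono[OF a(2)] by (simp add: rob eps_le mono)
  qed (use nat rob eps_le assms(1,3) in auto)
qed

end
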